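(* Let $q$ be a prime power, let $k\geq 2$ and $r>4$ be integers, let $n=rk$, and let $e=\lceil r/4\rceil-1$. Let $\gamma\in\mathbb{F}_{q^n}$ be a root of an irreducible polynomial of degree $r$ over $\mathbb{F}_{q^k}$. For every $\delta\in\mathbb{F}_{q^k}$ and every integer $l$ with $2\leq l\leq e+1$, the $\mathbb{F}_q$-subspace $$U_{\delta,l}=\{a+u\gamma+(u^q+\delta u)\gamma^{l}\mid a\in\mathbb{F}_q,\ u\in\mathbb{F}_{q^k}\}$$ of $\mathbb{F}_{q^n}$ is a Sidon space.
   Context: An $\mathbb{F}_q$-subspace $U$ of $\mathbb{F}_{q^n}$ is a Sidon space if for all nonzero $a,b,c,d\in U$, $ab=cd$ implies $\{a\mathbb{F}_q,b\mathbb{F}_q\}=\{c\mathbb{F}_q,d\mathbb{F}_q\}$. *)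

theory Defs
  imports "HOL-Library.Cardinality" "HOL-Computational_Algebra.Polynomial" "HOL-Computational_Algebra.Primes"
begin

text \<open>Inside a finite field 'a with q^n elements, the subfield F_{q^m} (for m dividing n)
  is the set of roots of X^(q^m) - X.\<close>
definition subfield_of_order :: "nat \<Rightarrow> 'a::field set" where
  "subfield_of_order Q = {x. x ^ Q = x}"

definition is_subspace_over :: "'a::field set \<Rightarrow> 'a set \<Rightarrow> bool" where
  "is_subspace_over F U \<longleftrightarrow> 0 \<in> U \<and> (\<forall>x\<in>U. \<forall>y\<in>U. x + y \<in> U) \<and> (\<forall>c\<in>F. \<forall>x\<in>U. c * x \<in> U)"

definition sidon_space :: "'a::field set \<Rightarrow> 'a set \<Rightarrow> bool" where
  "sidon_space F U \<longleftrightarrow> is_subspace_over F U \<and>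
     (\<forall>a\<in>U. \<forall>b\<in>U. \<forall>c\<in>U. \<forall>d\<in>U. a \<noteq> 0 \<longrightarrow> b \<noteq> 0 \<longrightarrow> c \<noteq> 0 \<longrightarrow> d \<noteq> 0 \<longrightarrow>
        a * b = c * d \<longrightarrow> {(\<lambda>x. a * x) ` F, (\<lambda>x. b * x) ` F} = {(\<lambda>x. c * x) ` F, (\<lambda>x. d * x) ` F})"

definition irreducible_over :: "'a::field set \<Rightarrow> 'a poly \<Rightarrow> bool" where
  "irreducible_over K p \<longleftrightarrow> (\<forall>i. coeff p i \<in> K) \<and> degree p \<ge> 1 \<and>
     (\<forall>f g. (\<forall>i. coeff f i \<in> K) \<longrightarrow> (\<forall>i. coeff g i \<in> K) \<longrightarrow> p = f * g \<longrightarrow>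
        degree f = 0 \<or> degree g = 0)"

end

theory Submission
  imports Defs
begin

(* Write the elements of U as elem a u = a + u gamma + twist u gamma^l, where
   twist u = u^q + delta u is F_q-linear. Since 2l < r and 1, gamma, ..., gamma^(r-1) are
   linearly independent over F_(q^k), an equation XY = X'Y' in U splits into its
   coefficients at 1, gamma, gamma^2 and gamma^(l+1):
     ab = a'b',  av + bu = a'v' + b'u',  uv = u'v',  u v^q + u^q v = u' v'^q + u'^q v'.
   If uv = 0, the first two relations identify the pairs up to F_q-multiples directly.
   Otherwise u^(q-1), v^(q-1) and u'^(q-1), v'^(q-1) have equal sums and products, so after
   swapping X' and Y' we get u^(q-1) = u'^(q-1), i.e. u = t u' with t in F_q^*; the relations
   over F_q that remain then force X = t X' and Y' = t Y, or Y = c X' and Y' = c X. *)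

section \<open>Subfields and the Frobenius map\<close>

lemma of_nat_CARD_eq_0: "of_nat CARD('a::{comm_ring_1,finite}) = (0::'a)"
proof -
  have "(\<Sum>x\<in>UNIV. x + 1) = (\<Sum>x\<in>(UNIV::'a set). x)"
    by (rule sum.reindex_bij_witness[of _ "\<lambda>x. x - 1" "\<lambda>x. x + 1"]) auto
  then show ?thesis
    by (simp add: sum.distrib)
qed

lemma CHAR_eq_if_CARD_eq_prime_power:
  assumes "prime p" and "CARD('a::{field,finite}) = p ^ N"
  shows "CHAR('a) = p"
proof -
  have "prime CHAR('a)"
    by (intro prime_CHAR_semidom finite_imp_CHAR_pos) simp
  moreover have "CHAR('a) dvd p ^ N"
    using of_nat_CARD_eq_0[where 'a='a] unfolding assms(2) of_nat_eq_0_iff_char_dvd .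
  ultimately show ?thesis
    using assms(1) prime_dvd_power primes_dvd_imp_eq by metis
qed

locale subfield_set =
  fixes K :: "'a::field set"
  assumes zero_mem: "0 \<in> K"
    and one_mem: "1 \<in> K"
    and add_mem: "x \<in> K \<Longrightarrow> y \<in> K \<Longrightarrow> x + y \<in> K"
    and uminus_mem: "x \<in> K \<Longrightarrow> - x \<in> K"
    and mult_mem: "x \<in> K \<Longrightarrow> y \<in> K \<Longrightarrow> x * y \<in> K"
    and inverse_mem: "x \<in> K \<Longrightarrow> inverse x \<in> K"
begin

lemma diff_mem: "x \<in> K \<Longrightarrow> y \<in> K \<Longrightarrow> x - y \<in> K"
  by (metis add_mem uminus_mem diff_conv_add_uminus)

lemma divide_mem: "x \<in> K \<Longrightarrow> y \<in> K \<Longrightarrow> x / y \<in> K"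
  by (simp add: divide_inverse mult_mem inverse_mem)

definition multiples :: "'a \<Rightarrow> 'a set" where
  "multiples x = (\<lambda>z. x * z) ` K"

lemma multiples_mult:
  assumes "t \<in> K" and "t \<noteq> 0"
  shows "multiples (t * x) = multiples x"
proof -
  have "(\<lambda>z. t * z) ` K = K"
  proof
    show "(\<lambda>z. t * z) ` K \<subseteq> K"
      using assms(1) mult_mem by blast
    show "K \<subseteq> (\<lambda>z. t * z) ` K"
    proof
      fix z assume "z \<in> K"
      then have "z = t * (z / t)" and "z / t \<in> K"
        using assms by (simp_all add: divide_mem)
      then show "z \<in> (\<lambda>z. t * z) ` K" by blast
    qed
  qed
  then have "multiples x = (\<lambda>z. x * z) ` (\<lambda>z. t * z) ` K"
    by (simp add: multiples_def)
  then show ?thesis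
    by (simp add: multiples_def image_image ac_simps)
qed

end

lemma subfield_set_subfield_of_order:
  assumes additive: "\<And>x y :: 'a::field. (x + y) ^ Q = x ^ Q + y ^ Q" and "0 < Q"
  shows "subfield_set (subfield_of_order Q :: 'a set)"
proof
  have "x ^ Q + (- x) ^ Q = 0" for x :: 'a
    using additive[of x "- x"] \<open>0 < Q\<close> by (simp add: zero_power)
  then have "(- x) ^ Q = - (x ^ Q)" for x :: 'a
    by (metis minus_unique)
  then show "x \<in> subfield_of_order Q \<Longrightarrow> - x \<in> subfield_of_order Q" for x :: 'a
    by (simp add: subfield_of_order_def)
qed (use \<open>0 < Q\<close> in \<open>simp_all add: subfield_of_order_def additive power_mult_distrib
      power_inverse zero_power\<close>)

lemma subfield_of_order_subset_power: "subfield_of_order q \<subseteq> subfield_of_order (q ^ j)"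
proof
  fix x :: 'a assume "x \<in> subfield_of_order q"
  then have "x ^ (q ^ j) = x" for j
    by (induction j) (simp_all add: subfield_of_order_def power_mult flip: mult.commute)
  then show "x \<in> subfield_of_order (q ^ j)"
    by (simp add: subfield_of_order_def)
qed

lemma power_mem_subfield_of_order: "x \<in> subfield_of_order Q \<Longrightarrow> x ^ j \<in> subfield_of_order Q"
  by (simp add: subfield_of_order_def mult.commute flip: power_mult) (simp add: power_mult)

locale fixed_subfield = subfield_set F for F :: "'a::field set" +
  fixes q :: nat
  assumes mem_iff_power_eq: "x \<in> F \<longleftrightarrow> x ^ q = x"
begin

lemma power_eq_self: "t \<in> F \<Longrightarrow> t ^ q = t"
  by (simp add: mem_iff_power_eq)

lemma q_pos: "0 < q"
proof (rule ccontr)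
  assume "\<not> 0 < q"
  then show False
    using zero_mem by (simp add: mem_iff_power_eq)
qed

lemma divide_mem_if_power_eq:
  assumes "u' \<noteq> 0" and "u ^ (q - 1) = u' ^ (q - 1)"
  shows "u / u' \<in> F"
proof -
  have "(u / u') ^ (q - 1) = 1"
    using assms by (simp add: power_divide)
  then show ?thesis
    using power_minus_mult[OF q_pos, of "u / u'"] by (simp add: mem_iff_power_eq)
qed

end

section \<open>Polynomials with coefficients in a subfield\<close>

definition poly_over :: "'a::zero set \<Rightarrow> 'a poly \<Rightarrow> bool" where
  "poly_over K p \<longleftrightarrow> (\<forall>i. coeff p i \<in> K)"

lemma irreducible_overD:
  assumes "irreducible_over K P"
  shows "poly_over K P" and "P \<noteq> 0"
    and "poly_over K f \<Longrightarrow> poly_over K g \<Longrightarrow> P = f * g \<Longrightarrow> degree f = 0 \<or> degree g = 0"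
  using assms by (auto simp: irreducible_over_def poly_over_def)

lemma degree_diff_leading_term_less:
  fixes f g :: "'a::field poly"
  assumes "g \<noteq> 0" and "degree g \<le> degree f"
  defines "h \<equiv> monom (lead_coeff f / lead_coeff g) (degree f - degree g) * g"
  shows "f - h = 0 \<or> degree (f - h) < degree f"
proof -
  have "coeff (f - h) i = 0" if "degree f \<le> i" for i
  proof (cases "i = degree f")
    case True
    then show ?thesis
      using assms by (simp add: h_def coeff_monom_mult)
  next
    case False
    then show ?thesis
      using that assms by (simp add: h_def coeff_monom_mult coeff_eq_0)
  qed
  then show ?thesis
    by (metis leading_coeff_0_iff not_le)
qed

context subfield_set
begin

lemma poly_over_0: "poly_over K 0"
  by (simp add: poly_over_def zero_mem)

lemma poly_over_add: "poly_over K f \<Longrightarrow> poly_over K g \<Longrightarrow> poly_over K (f + g)"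
  by (simp add: poly_over_def add_mem)

lemma poly_over_diff: "poly_over K f \<Longrightarrow> poly_over K g \<Longrightarrow> poly_over K (f - g)"
  by (simp add: poly_over_def diff_mem)

lemma poly_over_monom: "c \<in> K \<Longrightarrow> poly_over K (monom c n)"
  by (simp add: poly_over_def zero_mem)

lemma poly_over_pCons: "c \<in> K \<Longrightarrow> poly_over K p \<Longrightarrow> poly_over K (pCons c p)"
  by (simp add: poly_over_def coeff_pCons split: nat.split)

lemma poly_over_monom_mult: "c \<in> K \<Longrightarrow> poly_over K g \<Longrightarrow> poly_over K (monom c n * g)"
  by (simp add: poly_over_def coeff_monom_mult zero_mem mult_mem)

lemma poly_over_div_mod:
  assumes "poly_over K g" and "g \<noteq> 0"
  shows "poly_over K f \<Longrightarrow>
    \<exists>s t. poly_over K s \<and> poly_over K t \<and> f = s * g + t \<and> (t = 0 \<or> degree t < degree g)"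
proof (induction "degree f" arbitrary: f rule: less_induct)
  case less
  show ?case
  proof (cases "f = 0 \<or> degree f < degree g")
    case True
    then show ?thesis
      using less.prems poly_over_0 by (intro exI[of _ 0] exI[of _ f]) auto
  next
    case False
    define c where "c = lead_coeff f / lead_coeff g"
    define h where "h = monom c (degree f - degree g) * g"
    have c: "c \<in> K"
      using less.prems assms(1) by (simp add: c_def poly_over_def divide_mem)
    have h: "poly_over K h"
      unfolding h_def using c assms(1) by (rule poly_over_monom_mult)
    consider "f - h = 0" | "degree (f - h) < degree f"
      using degree_diff_leading_term_less[OF assms(2), of f] False by (auto simp: h_def c_def)
    then show ?thesis
    proof cases
      case 1
      then have "f = monom c (degree f - degree g) * g + 0"
        by (simp add: h_def)
      then show ?thesis
        using poly_over_monom[OF c] poly_over_0 by blast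
    next
      case 2
      then obtain s t where st: "poly_over K s" "poly_over K t" "f - h = s * g + t"
          "t = 0 \<or> degree t < degree g"
        using less.hyps poly_over_diff[OF less.prems h] by blast
      then have "f = (s + monom c (degree f - degree g)) * g + t"
        by (simp add: h_def algebra_simps)
      then show ?thesis
        using st poly_over_add[OF st(1) poly_over_monom[OF c]] by blast
    qed
  qed
qed

lemma degree_le_if_root_of_irreducible:
  assumes irr: "irreducible_over K P" and "poly P \<gamma> = 0"
    and "poly_over K Q" "Q \<noteq> 0" "poly Q \<gamma> = 0"
  shows "degree P \<le> degree Q"
proof -
  let ?annihilates = "\<lambda>R. poly_over K R \<and> R \<noteq> 0 \<and> poly R \<gamma> = 0"
  obtain R where R: "?annihilates R" and min: "\<And>S. ?annihilates S \<Longrightarrow> degree R \<le> degree S"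
    using ex_has_least_nat[of ?annihilates Q degree] assms(3-5) by blast
  \<comment> \<open>\<open>R\<close> is a minimal polynomial of \<open>\<gamma>\<close> over \<open>K\<close>; it divides \<open>P\<close>, so \<open>P\<close> is a unit times \<open>R\<close>.\<close>
  obtain s t where st: "poly_over K s" "poly_over K t" "P = s * R + t"
      "t = 0 \<or> degree t < degree R"
    using poly_over_div_mod R irreducible_overD(1)[OF irr] by blast
  have "poly t \<gamma> = 0"
    using st(3) R \<open>poly P \<gamma> = 0\<close> by (metis add_0 mult_zero_right poly_add poly_mult)
  then have "t = 0"
    using st(2,4) min by (meson leD)
  then have P: "P = s * R"
    using st(3) by simp
  have "degree R \<noteq> 0"
  proof
    assume "degree R = 0"
    then obtain c where "R = [:c:]"
      by (rule degree_eq_zeroE)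
    with R show False
      by simp
  qed
  then have "degree s = 0"
    using irreducible_overD(3)[OF irr st(1), of R] R P by auto
  then have "degree P = degree R"
    using P irreducible_overD(2)[OF irr] by (auto simp: degree_mult_eq)
  then show ?thesis
    using min assms(3-5) by simp
qed

lemma poly_eq_if_poly_eq_at_root_of_irreducible:
  assumes "irreducible_over K P" and "poly P \<gamma> = 0"
    and "poly_over K f" "poly_over K g" "degree f < degree P" "degree g < degree P"
    and "poly f \<gamma> = poly g \<gamma>"
  shows "f = g"
proof (rule ccontr)
  assume "f \<noteq> g"
  then have "degree P \<le> degree (f - g)"
    using assms by (intro degree_le_if_root_of_irreducible) (auto intro: poly_over_diff)
  moreover have "degree (f - g) < degree P"
    using assms(5,6) by (rule degree_diff_less)
  ultimately show False
    by simp
qed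

end

definition product_poly :: "nat \<Rightarrow> 'a::comm_ring_1 \<Rightarrow> 'a \<Rightarrow> 'a \<Rightarrow> 'a \<Rightarrow> 'a \<Rightarrow> 'a \<Rightarrow> 'a poly" where
  "product_poly l a u A b v B =
     [:a * b, a * v + b * u, u * v:] + monom (a * B + b * A) l + monom (u * B + v * A) (l + 1)
     + monom (A * B) (2 * l)"

lemma poly_product_poly:
  "poly (product_poly l a u A b v B) x = (a + u * x + A * x ^ l) * (b + v * x + B * x ^ l)"
  by (simp add: product_poly_def poly_monom algebra_simps power_add power_mult power2_eq_square)

lemma degree_product_poly:
  assumes "2 \<le> l"
  shows "degree (product_poly l a u A b v B) \<le> 2 * l"
  unfolding product_poly_def using assms
  by (intro degree_add_le order.trans[OF degree_monom_le] order.trans[OF degree_pCons_le])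
    (auto intro: order.trans[OF degree_pCons_le])

lemma coeff_product_poly:
  assumes "2 \<le> l"
  shows "coeff (product_poly l a u A b v B) 0 = a * b"
    and "coeff (product_poly l a u A b v B) 1 = a * v + b * u"
    and "coeff (product_poly l a u A b v B) 2 = u * v + (if l = 2 then a * B + b * A else 0)"
    and "coeff (product_poly l a u A b v B) (l + 1) = u * B + v * A"
  using assms by (auto simp: product_poly_def coeff_monom coeff_pCons numeral_2_eq_2 split: nat.split)

lemma (in subfield_set) poly_over_product_poly:
  assumes "a \<in> K" "u \<in> K" "A \<in> K" "b \<in> K" "v \<in> K" "B \<in> K"
  shows "poly_over K (product_poly l a u A b v B)"
  unfolding product_poly_def
  by (intro poly_over_add poly_over_monom poly_over_pCons poly_over_0 add_mem mult_mem assms)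

section \<open>The space of twisted elements\<close>

lemma eq_or_eq_if_sum_prod_eq:
  fixes x y x' y' :: "'a::idom"
  assumes "x + y = x' + y'" and "x * y = x' * y'"
  shows "x = x' \<or> x = y'"
proof -
  have "(x - x') * (x - y') = x * (x + y - (x' + y')) - (x * y - x' * y')"
    by (simp add: algebra_simps)
  also have "\<dots> = 0"
    using assms by simp
  finally show ?thesis
    by simp
qed

locale twisted_elements = fixed_subfield F q for F :: "'a::field set" and q +
  fixes \<delta> \<gamma> :: 'a and l :: nat
  assumes power_q_add: "\<And>x y :: 'a. (x + y) ^ q = x ^ q + y ^ q"
begin

definition twist :: "'a \<Rightarrow> 'a" where
  "twist u = u ^ q + \<delta> * u"

definition elem :: "'a \<Rightarrow> 'a \<Rightarrow> 'a" where
  "elem a u = a + u * \<gamma> + twist u * \<gamma> ^ l"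

lemma twist_add: "twist (u + v) = twist u + twist v"
  by (simp add: twist_def power_q_add algebra_simps)

lemma twist_mult: "t \<in> F \<Longrightarrow> twist (t * u) = t * twist u"
  by (simp add: twist_def power_mult_distrib power_eq_self algebra_simps)

lemma elem_zero: "elem a 0 = a"
  using q_pos by (simp add: elem_def twist_def zero_power)

lemma elem_add: "elem a u + elem b v = elem (a + b) (u + v)"
  by (simp add: elem_def twist_add algebra_simps)

lemma elem_mult: "t \<in> F \<Longrightarrow> t * elem a u = elem (t * a) (t * u)"
  by (simp add: elem_def twist_mult algebra_simps)

lemma twist_lincomb: "a \<in> F \<Longrightarrow> b \<in> F \<Longrightarrow> twist (a * v + b * u) = a * twist v + b * twist u"
  by (simp add: twist_add twist_mult)

lemma multiples_elem_pair_eq_if_zero: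
  assumes "a \<in> F" "b \<in> F" "a' \<in> F" and "a \<noteq> 0" "a' \<noteq> 0"
    and "a * b = a' * b'" and "a * v = a' * v'"
  shows "{multiples (elem a 0), multiples (elem b v)} =
    {multiples (elem a' 0), multiples (elem b' v')}"
proof -
  define t where "t = a / a'"
  have t: "t \<in> F" "t \<noteq> 0"
    using assms by (simp_all add: t_def divide_mem)
  have "b' = t * b" and "v' = t * v"
    using assms by (simp_all add: t_def field_simps)
  then have "elem b' v' = t * elem b v"
    by (simp add: elem_mult[OF t(1)])
  moreover have "elem a 0 = t * elem a' 0"
    using \<open>a' \<noteq> 0\<close> by (simp add: elem_zero t_def)
  ultimately show ?thesis
    using multiples_mult[OF t] by simp
qed

lemma multiples_elem_pair_eq_if_first_zero:
  assumes F: "a \<in> F" "b \<in> F" "a' \<in> F" "b' \<in> F"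
    and coeff0: "a * b = a' * b'" and coeff1: "a * v + b * u = a' * v' + b' * u'"
    and "u = 0" and "u' = 0 \<or> v' = 0"
    and nonzero: "a \<noteq> 0" "elem a' u' \<noteq> 0" "elem b' v' \<noteq> 0"
  shows "{multiples (elem a u), multiples (elem b v)} =
    {multiples (elem a' u'), multiples (elem b' v')}"
proof (cases "u' = 0")
  case True
  then have "a' \<noteq> 0"
    using nonzero(2) by (simp add: elem_zero)
  with True \<open>u = 0\<close> show ?thesis
    using multiples_elem_pair_eq_if_zero[OF F(1-3) \<open>a \<noteq> 0\<close>] coeff0 coeff1 by simp
next
  case False
  then have "v' = 0"
    using \<open>u' = 0 \<or> v' = 0\<close> by simp
  then have "b' \<noteq> 0"
    using nonzero(3) by (simp add: elem_zero)
  moreover have "a * b = b' * a'" "a * v = b' * u'"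
    using coeff0 coeff1 \<open>u = 0\<close> \<open>v' = 0\<close> by (simp_all add: ac_simps)
  ultimately have "{multiples (elem a 0), multiples (elem b v)} =
      {multiples (elem b' 0), multiples (elem a' u')}"
    by (rule multiples_elem_pair_eq_if_zero[OF F(1,2,4) \<open>a \<noteq> 0\<close>])
  with \<open>u = 0\<close> \<open>v' = 0\<close> show ?thesis
    by (simp add: insert_commute)
qed

lemma multiples_elem_pair_eq_if_degenerate:
  assumes F: "a \<in> F" "b \<in> F" "a' \<in> F" "b' \<in> F"
    and coeff0: "a * b = a' * b'" and coeff1: "a * v + b * u = a' * v' + b' * u'"
    and "u = 0 \<or> v = 0" and "u' = 0 \<or> v' = 0"
    and nonzero: "elem a u \<noteq> 0" "elem b v \<noteq> 0" "elem a' u' \<noteq> 0" "elem b' v' \<noteq> 0"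
  shows "{multiples (elem a u), multiples (elem b v)} =
    {multiples (elem a' u'), multiples (elem b' v')}"
proof (cases "u = 0")
  case True
  then have "a \<noteq> 0"
    using nonzero(1) by (simp add: elem_zero)
  with True show ?thesis
    using multiples_elem_pair_eq_if_first_zero[OF F coeff0 coeff1] \<open>u' = 0 \<or> v' = 0\<close> nonzero(3,4)
    by blast
next
  case False
  then have "v = 0"
    using \<open>u = 0 \<or> v = 0\<close> by simp
  then have "b \<noteq> 0"
    using nonzero(2) by (simp add: elem_zero)
  moreover have "b * a = a' * b'" "b * u + a * v = a' * v' + b' * u'"
    using coeff0 coeff1 by (simp_all add: ac_simps)
  ultimately have "{multiples (elem b v), multiples (elem a u)} =
      {multiples (elem a' u'), multiples (elem b' v')}"
    using multiples_elem_pair_eq_if_first_zero[OF F(2,1,3,4)] \<open>v = 0\<close> \<open>u' = 0 \<or> v' = 0\<close>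
      nonzero(3,4)
    by blast
  then show ?thesis
    by (simp add: insert_commute)
qed

lemma multiples_elem_pair_eq_if_scaled:
  assumes F: "a \<in> F" "b \<in> F" "a' \<in> F" "b' \<in> F" and t: "t \<in> F" "t \<noteq> 0"
    and u: "u = t * u'" and v': "v' = t * v"
    and coeff0: "a * b = a' * b'" and coeff1: "a * v + b * u = a' * v' + b' * u'"
    and nonzero: "v \<noteq> 0" "u' \<noteq> 0"
  shows "{multiples (elem a u), multiples (elem b v)} =
    {multiples (elem a' u'), multiples (elem b' v')}"
proof -
  define \<alpha> where "\<alpha> = a - t * a'"
  define \<beta> where "\<beta> = t * b - b'"
  have "\<alpha> \<in> F" "\<beta> \<in> F"
    using F t by (simp_all add: \<alpha>_def \<beta>_def diff_mem mult_mem)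
  have lin: "\<alpha> * v + \<beta> * u' = 0"
    using coeff1 by (simp add: \<alpha>_def \<beta>_def u v' algebra_simps)
  show ?thesis
  proof (cases "\<alpha> = 0")
    case True
    then have "\<beta> = 0"
      using lin nonzero by simp
    with True have "elem a u = t * elem a' u'" and "elem b' v' = t * elem b v"
      by (simp_all add: \<alpha>_def \<beta>_def u v' elem_mult[OF t(1)])
    then show ?thesis
      using multiples_mult[OF t] by simp
  next
    case False
    define c where "c = - \<beta> / \<alpha>"
    have v: "v = c * u'"
      using lin False by (simp add: c_def field_simps add_eq_0_iff)
    have c: "c \<in> F" "c \<noteq> 0"
      using v nonzero \<open>\<alpha> \<in> F\<close> \<open>\<beta> \<in> F\<close> by (auto simp: c_def divide_mem uminus_mem)
    have "\<alpha> * b = \<alpha> * (c * a')"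
      using coeff0 False by (simp add: \<alpha>_def \<beta>_def c_def field_simps)
    then have b: "b = c * a'"
      using False by simp
    have "b' = t * b - \<beta>"
      by (simp add: \<beta>_def)
    also have "\<dots> = c * a"
      using False by (simp add: b \<alpha>_def c_def field_simps)
    finally have "elem b' v' = c * elem a u"
      by (simp add: v' v u elem_mult[OF c(1)] ac_simps)
    moreover have "elem b v = c * elem a' u'"
      by (simp add: b v elem_mult[OF c(1)])
    ultimately show ?thesis
      using multiples_mult[OF c] by (simp add: insert_commute)
  qed
qed


lemma multiples_elem_pair_eq_if_power_eq:
  assumes F: "a \<in> F" "b \<in> F" "a' \<in> F" "b' \<in> F"
    and coeff0: "a * b = a' * b'" and coeff1: "a * v + b * u = a' * v' + b' * u'"
    and coeff2: "u * v = u' * v'"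
    and nonzero: "u \<noteq> 0" "v \<noteq> 0" "u' \<noteq> 0"
    and "u ^ (q - 1) = u' ^ (q - 1)"
  shows "{multiples (elem a u), multiples (elem b v)} =
    {multiples (elem a' u'), multiples (elem b' v')}"
proof -
  define t where "t = u / u'"
  have t: "t \<in> F" "t \<noteq> 0"
    using divide_mem_if_power_eq assms by (auto simp: t_def)
  have u: "u = t * u'" and v': "v' = t * v"
    using coeff2 nonzero by (auto simp: t_def field_simps)
  show ?thesis
    by (rule multiples_elem_pair_eq_if_scaled[OF F t u v' coeff0 coeff1 nonzero(2,3)])
qed

lemma multiples_elem_pair_eq:
  assumes F: "a \<in> F" "b \<in> F" "a' \<in> F" "b' \<in> F"
    and coeff0: "a * b = a' * b'" and coeff1: "a * v + b * u = a' * v' + b' * u'"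
    and coeff2: "u * v = u' * v'"
    and coeff3: "u * v ^ q + u ^ q * v = u' * v' ^ q + u' ^ q * v'"
    and nonzero: "elem a u \<noteq> 0" "elem b v \<noteq> 0" "elem a' u' \<noteq> 0" "elem b' v' \<noteq> 0"
  shows "{multiples (elem a u), multiples (elem b v)} =
    {multiples (elem a' u'), multiples (elem b' v')}"
proof (cases "u * v = 0")
  case True
  then have "u = 0 \<or> v = 0" and "u' = 0 \<or> v' = 0"
    using coeff2 by auto
  then show ?thesis
    using multiples_elem_pair_eq_if_degenerate[OF F coeff0 coeff1 _ _ nonzero] by blast
next
  case False
  then have nonzero': "u \<noteq> 0" "v \<noteq> 0" "u' \<noteq> 0" "v' \<noteq> 0"
    using coeff2 by auto
  have power_q: "x ^ q = x ^ (q - 1) * x" for x :: 'a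
    by (rule power_minus_mult[OF q_pos, symmetric])
  have "u * v * (u ^ (q - 1) + v ^ (q - 1)) = u' * v' * (u' ^ (q - 1) + v' ^ (q - 1))"
    using coeff3 unfolding power_q by (simp add: algebra_simps)
  then have "u ^ (q - 1) + v ^ (q - 1) = u' ^ (q - 1) + v' ^ (q - 1)"
    using coeff2 False by simp
  moreover have "u ^ (q - 1) * v ^ (q - 1) = u' ^ (q - 1) * v' ^ (q - 1)"
    using coeff2 by (simp flip: power_mult_distrib)
  ultimately have "u ^ (q - 1) = u' ^ (q - 1) \<or> u ^ (q - 1) = v' ^ (q - 1)"
    by (rule eq_or_eq_if_sum_prod_eq)
  then show ?thesis
  proof
    assume "u ^ (q - 1) = u' ^ (q - 1)"
    then show ?thesis
      by (rule multiples_elem_pair_eq_if_power_eq[OF F coeff0 coeff1 coeff2 nonzero'(1-3)])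
  next
    assume "u ^ (q - 1) = v' ^ (q - 1)"
    moreover have swapped: "a * b = b' * a'" "a * v + b * u = b' * u' + a' * v'" "u * v = v' * u'"
      using coeff0 coeff1 coeff2 by (simp_all add: ac_simps)
    ultimately have "{multiples (elem a u), multiples (elem b v)} =
        {multiples (elem b' v'), multiples (elem a' u')}"
      by (intro multiples_elem_pair_eq_if_power_eq[OF F(1,2,4,3) swapped nonzero'(1,2,4)])
    then show ?thesis
      by (simp add: insert_commute)
  qed
qed

lemma is_subspace_over_elems:
  assumes "subfield_set K" and "F \<subseteq> K"
  shows "is_subspace_over F {elem a u | a u. a \<in> F \<and> u \<in> K}"
proof -
  interpret K: subfield_set K
    by (rule assms(1))
  let ?U = "{elem a u | a u. a \<in> F \<and> u \<in> K}"
  show ?thesis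
    unfolding is_subspace_over_def
  proof (intro conjI ballI)
    show "0 \<in> ?U"
      using elem_zero[of 0, symmetric] zero_mem K.zero_mem by blast
  next
    fix x y assume "x \<in> ?U" "y \<in> ?U"
    then obtain a u b v where "x = elem a u" "y = elem b v" "a \<in> F" "b \<in> F" "u \<in> K" "v \<in> K"
      by blast
    then show "x + y \<in> ?U"
      by (auto simp: elem_add intro: add_mem K.add_mem)
  next
    fix t x assume "t \<in> F" "x \<in> ?U"
    then obtain a u where "x = elem a u" "a \<in> F" "u \<in> K"
      by blast
    then show "t * x \<in> ?U"
      using \<open>t \<in> F\<close> assms(2) by (auto simp: elem_mult intro: mult_mem K.mult_mem)
  qed
qed

lemma elem_product_relations:
  assumes K: "subfield_set K" "F \<subseteq> K" "\<And>u. u \<in> K \<Longrightarrow> u ^ q \<in> K" "\<delta> \<in> K"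
    and P: "irreducible_over K P" "poly P \<gamma> = 0" and l: "2 \<le> l" "2 * l < degree P"
    and mem: "a \<in> F" "b \<in> F" "a' \<in> F" "b' \<in> F" "u \<in> K" "v \<in> K" "u' \<in> K" "v' \<in> K"
    and eq: "elem a u * elem b v = elem a' u' * elem b' v'"
  shows "a * b = a' * b'" and "a * v + b * u = a' * v' + b' * u'" and "u * v = u' * v'"
    and "u * v ^ q + u ^ q * v = u' * v' ^ q + u' ^ q * v'"
proof -
  interpret K: subfield_set K
    by (rule K(1))
  have twist_mem: "twist x \<in> K" if "x \<in> K" for x
    using that K by (simp add: twist_def K.add_mem K.mult_mem)
  have F_mem: "x \<in> K" if "x \<in> F" for x
    using that K(2) by blast
  let ?p = "product_poly l a u (twist u) b v (twist v)"
  let ?p' = "product_poly l a' u' (twist u') b' v' (twist v')"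
  have same_poly: "?p = ?p'"
  proof (rule K.poly_eq_if_poly_eq_at_root_of_irreducible[OF P])
    show "poly_over K ?p" "poly_over K ?p'"
      using mem by (auto intro!: K.poly_over_product_poly twist_mem simp: F_mem)
    show "degree ?p < degree P" "degree ?p' < degree P"
      using le_less_trans[OF degree_product_poly[OF l(1)] l(2)] by blast+
    show "poly ?p \<gamma> = poly ?p' \<gamma>"
      using eq by (simp add: poly_product_poly elem_def)
  qed
  then show "a * b = a' * b'" and coeff1: "a * v + b * u = a' * v' + b' * u'"
    using coeff_product_poly[OF l(1)] by metis+
  have coeff2: "u * v + (if l = 2 then a * twist v + b * twist u else 0) =
      u' * v' + (if l = 2 then a' * twist v' + b' * twist u' else 0)"
    and coeff3: "u * twist v + v * twist u = u' * twist v' + v' * twist u'"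
    using same_poly coeff_product_poly[OF l(1)] by metis+
  \<comment> \<open>For \<open>l = 2\<close> the \<open>\<gamma>\<^sup>2\<close>-coefficient also contains \<open>a * twist v + b * twist u\<close>,
    which is \<open>twist\<close> of the \<open>\<gamma>\<close>-coefficient.\<close>
  have "a * twist v + b * twist u = a' * twist v' + b' * twist u'"
    using coeff1 mem by (simp flip: twist_lincomb)
  with coeff2 show coeff2': "u * v = u' * v'"
    by (simp split: if_splits)
  have "x * twist y + y * twist x = x * y ^ q + x ^ q * y + 2 * \<delta> * (x * y)" for x y
    by (simp add: twist_def algebra_simps)
  with coeff3 coeff2' show "u * v ^ q + u ^ q * v = u' * v' ^ q + u' ^ q * v'"
    by simp
qed

lemma sidon_space_elems:
  assumes "subfield_set K" "F \<subseteq> K" "\<And>u. u \<in> K \<Longrightarrow> u ^ q \<in> K" "\<delta> \<in> K"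
    and "irreducible_over K P" "poly P \<gamma> = 0" "2 \<le> l" "2 * l < degree P"
  shows "sidon_space F {elem a u | a u. a \<in> F \<and> u \<in> K}"
proof -
  let ?U = "{elem a u | a u. a \<in> F \<and> u \<in> K}"
  have pairs: "{(\<lambda>x. X * x) ` F, (\<lambda>x. Y * x) ` F} = {(\<lambda>x. X' * x) ` F, (\<lambda>x. Y' * x) ` F}"
    if mem: "X \<in> ?U" "Y \<in> ?U" "X' \<in> ?U" "Y' \<in> ?U"
      and nonzero: "X \<noteq> 0" "Y \<noteq> 0" "X' \<noteq> 0" "Y' \<noteq> 0" and eq: "X * Y = X' * Y'"
    for X Y X' Y'
  proof -
    obtain a u where X: "X = elem a u" "a \<in> F" "u \<in> K"
      using mem(1) by blast
    obtain b v where Y: "Y = elem b v" "b \<in> F" "v \<in> K"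
      using mem(2) by blast
    obtain a' u' where X': "X' = elem a' u'" "a' \<in> F" "u' \<in> K"
      using mem(3) by blast
    obtain b' v' where Y': "Y' = elem b' v'" "b' \<in> F" "v' \<in> K"
      using mem(4) by blast
    note relations = elem_product_relations[OF assms X(2) Y(2) X'(2) Y'(2) X(3) Y(3) X'(3) Y'(3)]
    have "{multiples X, multiples Y} = {multiples X', multiples Y'}"
      using nonzero eq unfolding X(1) Y(1) X'(1) Y'(1)
      by (intro multiples_elem_pair_eq[OF X(2) Y(2) X'(2) Y'(2)] relations)
    then show ?thesis
      by (simp add: multiples_def)
  qed
  show ?thesis
    unfolding sidon_space_def
  proof (intro conjI ballI impI)
    show "is_subspace_over F ?U"
      by (rule is_subspace_over_elems[OF assms(1,2)])
  qed (rule pairs)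
qed

end

theorem lemma3p10:
  fixes q p m k r n :: nat and \<gamma> \<delta> :: "'a::{field,finite}" and l :: nat
  assumes "prime p" and "m \<ge> 1" and "q = p ^ m"
    and "k \<ge> 2" and "r > 4" and "n = r * k"
    and "CARD('a) = q ^ n"
    and "\<exists>P. irreducible_over (subfield_of_order (q ^ k)) P \<and> degree P = r \<and> poly P \<gamma> = 0"
    and "\<delta> \<in> subfield_of_order (q ^ k)"
    and "2 \<le> l" and "int l \<le> (\<lceil>real r / 4\<rceil> - 1) + 1"
  shows "sidon_space (subfield_of_order q)
           {a + u * \<gamma> + (u ^ q + \<delta> * u) * \<gamma> ^ l | a u.
              a \<in> subfield_of_order q \<and> u \<in> subfield_of_order (q ^ k)}"
proof -
  let ?F = "subfield_of_order q :: 'a set" and ?K = "subfield_of_order (q ^ k) :: 'a set"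
  have "CHAR('a) = p"
    using assms(1,3,7)
    by (intro CHAR_eq_if_CARD_eq_prime_power[of p "m * n"]) (simp_all add: power_mult)
  then have frobenius: "(x + y) ^ (q ^ j) = x ^ (q ^ j) + y ^ (q ^ j)" for x y :: 'a and j
    using assms(1,3) by (intro freshmans_dream'[where n = "m * j"]) (simp_all add: power_mult)
  have "0 < q"
    using assms(1,3) by (simp add: prime_gt_0_nat)
  then have F: "subfield_set ?F" and K: "subfield_set ?K"
    using frobenius[where j = 1] frobenius[where j = k]
    by (simp_all add: subfield_set_subfield_of_order)
  interpret twisted_elements ?F q \<delta> \<gamma> l
    using F frobenius[where j = 1]
    by (intro twisted_elements.intro fixed_subfield.intro fixed_subfield_axioms.intro
        twisted_elements_axioms.intro) (simp_all add: subfield_of_order_def)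
  obtain P where P: "irreducible_over ?K P" "degree P = r" "poly P \<gamma> = 0"
    using assms(8) by blast
  have "real l - 1 < real r / 4"
    using assms(11) by (simp add: le_ceiling_iff)
  then have "2 * l < degree P"
    using assms(5) P(2) by linarith
  then show ?thesis
    using sidon_space_elems[OF K subfield_of_order_subset_power power_mem_subfield_of_order
        assms(9) P(1,3) assms(10)]
    by (simp add: elem_def twist_def)
qed


end
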